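(* Let $0<p<q<\infty$. Then the norm of the embedding operator $I\colon\ell^{p,q}\to\ell^{p,\infty}$ is $$\|I\|=\Big(\frac{q}{p}\Big)^{1/q}.$$
   Context: For a scalar sequence $a=(a_n)$, its decreasing rearrangement is $a^*_n=\inf\{\omega>0:\#\{k:|a_k|>\omega\}\le n-1\}$. For $p,q\in(0,\infty]$, the Lorentz sequence space $\ell^{p,q}$ consists of all sequences $a$ with $\|a\|_{p,q}<\infty$, where $\|a\|_{p,q}=\big(\sum_{n=1}^\infty (a_n^* )^q n^{q/p-1}\big)^{1/q}$ if $q<\infty$, and $\|a\|_{p,\infty}=\sup_{n}n^{1/p}a_n^*$. The operator norm is $\|I\|=\sup_{\|a\|_{p,q}\le1}\|a\|_{p,\infty}$. *)

theory Defs
  imports "HOL-Analysis.Analysis"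
begin

definition rearr_levels :: "(nat \<Rightarrow> real) \<Rightarrow> nat \<Rightarrow> real set" where
  "rearr_levels a n = {\<omega>. \<omega> > 0 \<and> finite {k. \<bar>a k\<bar> > \<omega>} \<and> card {k. \<bar>a k\<bar> > \<omega>} \<le> n - 1}"

text \<open>Decreasing rearrangement a*_n (n \<ge> 1); meaningful when rearr_levels a n is nonempty.\<close>
definition decr_rearr :: "(nat \<Rightarrow> real) \<Rightarrow> nat \<Rightarrow> real" where
  "decr_rearr a n = Inf (rearr_levels a n)"

definition lorentz_term :: "real \<Rightarrow> real \<Rightarrow> (nat \<Rightarrow> real) \<Rightarrow> nat \<Rightarrow> real" where
  "lorentz_term p q a n = (decr_rearr a n) powr q * (real n) powr (q / p - 1)"

definition in_lorentz :: "real \<Rightarrow> real \<Rightarrow> (nat \<Rightarrow> real) \<Rightarrow> bool" where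
  "in_lorentz p q a \<longleftrightarrow> (\<forall>n\<ge>1. rearr_levels a n \<noteq> {}) \<and> summable (\<lambda>n. lorentz_term p q a (n + 1))"

definition lorentz_norm :: "real \<Rightarrow> real \<Rightarrow> (nat \<Rightarrow> real) \<Rightarrow> real" where
  "lorentz_norm p q a = (\<Sum>n. lorentz_term p q a (n + 1)) powr (1 / q)"

definition weak_lorentz_norm :: "real \<Rightarrow> (nat \<Rightarrow> real) \<Rightarrow> ereal" where
  "weak_lorentz_norm p a = (SUP n\<in>{1..}. ereal ((real n) powr (1 / p) * decr_rearr a n))"

definition embedding_norm :: "real \<Rightarrow> real \<Rightarrow> ereal" where
  "embedding_norm p q = (SUP a\<in>{a. in_lorentz p q a \<and> lorentz_norm p q a \<le> 1}. weak_lorentz_norm p a)"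

end

theory Submission
  imports Defs
begin

text \<open>Let r = q/p \<ge> 1. Since a* is nonincreasing, the first N terms of the Lorentz series
  give ||a||^q \<ge> (a*_N)^q (1^(r-1) + ... + N^(r-1)) \<ge> (a*_N)^q N^r / r, that is
  N^(1/p) a*_N \<le> r^(1/q) ||a||. Conversely, the indicator of the first N coordinates, scaled to
  norm 1, has weak norm at least r^(1/q) (N/(N+1))^(1/p), which tends to r^(1/q). Both estimates
  come from comparing the power sum 1^(r-1) + ... + N^(r-1) with the integral of x^(r-1).\<close>

lemma powr_add_one_diff_bounds:
  fixes r x :: real
  assumes r: "r \<ge> 1" and x: "x > 0"
  shows "r * x powr (r - 1) \<le> (x + 1) powr r - x powr r"
    and "(x + 1) powr r - x powr r \<le> r * (x + 1) powr (r - 1)"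
proof -
  have "\<exists>z. x < z \<and> z < x + 1 \<and> (x + 1) powr r - x powr r = ((x + 1) - x) * (r * z powr (r - 1))"
    using x by (intro MVT2) (auto intro!: derivative_eq_intros)
  then obtain z where z: "x < z" "z < x + 1" "(x + 1) powr r - x powr r = r * z powr (r - 1)"
    by auto
  have "x powr (r - 1) \<le> z powr (r - 1)" "z powr (r - 1) \<le> (x + 1) powr (r - 1)"
    using z x r by (auto intro: powr_mono2)
  with z r show "r * x powr (r - 1) \<le> (x + 1) powr r - x powr r"
    and "(x + 1) powr r - x powr r \<le> r * (x + 1) powr (r - 1)"
    by simp_all
qed

lemma sum_Suc_powr_lower:
  fixes r :: real
  assumes r: "r \<ge> 1"
  shows "real N powr r / r \<le> (\<Sum>n<N. real (n + 1) powr (r - 1))"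
proof (induction N)
  case 0
  then show ?case by simp
next
  case (Suc N)
  have "real (Suc N) powr r / r \<le> real N powr r / r + real (N + 1) powr (r - 1)"
  proof (cases "N = 0")
    case True
    then show ?thesis using r by simp
  next
    case False
    then have "(real N + 1) powr r - real N powr r \<le> r * (real N + 1) powr (r - 1)"
      using powr_add_one_diff_bounds(2)[OF r, of "real N"] by simp
    then show ?thesis using r by (simp add: field_simps)
  qed
  then show ?case using Suc by simp
qed

lemma sum_Suc_powr_upper:
  fixes r :: real
  assumes r: "r \<ge> 1"
  shows "(\<Sum>n<N. real (n + 1) powr (r - 1)) \<le> real (N + 1) powr r / r"
proof (induction N)
  case 0
  then show ?case using r by simp
next
  case (Suc N)
  have "(real N + 1) powr r + r * (real N + 1) powr (r - 1) \<le> (real N + 1 + 1) powr r"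
    using powr_add_one_diff_bounds(1)[OF r, of "real N + 1"] by linarith
  then have "((real N + 1) powr r + r * (real N + 1) powr (r - 1)) / r \<le> (real N + 1 + 1) powr r / r"
    using r by (intro divide_right_mono) auto
  then have "real (N + 1) powr r / r + real (N + 1) powr (r - 1) \<le> real (N + 2) powr r / r"
    using r by (simp add: add_divide_distrib add.commute)
  then show ?case using Suc by simp
qed

lemma rearr_levels_mono: "m \<le> n \<Longrightarrow> rearr_levels a m \<subseteq> rearr_levels a n"
  by (auto simp: rearr_levels_def)

lemma bdd_below_rearr_levels: "bdd_below (rearr_levels a n)"
  by (rule bdd_belowI[of _ 0]) (auto simp: rearr_levels_def)

lemma decr_rearr_nonneg: "rearr_levels a n \<noteq> {} \<Longrightarrow> 0 \<le> decr_rearr a n"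
  unfolding decr_rearr_def by (rule cInf_greatest) (auto simp: rearr_levels_def)

lemma decr_rearr_antimono:
  assumes "m \<le> n" and "rearr_levels a m \<noteq> {}"
  shows "decr_rearr a n \<le> decr_rearr a m"
  unfolding decr_rearr_def
  using cInf_superset_mono[OF assms(2) bdd_below_rearr_levels rearr_levels_mono[OF assms(1)]] .

lemma lorentz_term_nonneg: "0 \<le> lorentz_term p q a n"
  by (simp add: lorentz_term_def)

lemma decr_rearr_powr_partial_sum_le:
  assumes a: "in_lorentz p q a" and q: "q \<ge> 0"
  shows "decr_rearr a N powr q * (\<Sum>n<N. real (n + 1) powr (q / p - 1))
           \<le> (\<Sum>n. lorentz_term p q a (n + 1))"
proof -
  have levels: "rearr_levels a n \<noteq> {}" if "n \<ge> 1" for n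
    using a that by (simp add: in_lorentz_def)
  have "decr_rearr a N powr q * (\<Sum>n<N. real (n + 1) powr (q / p - 1))
          = (\<Sum>n<N. decr_rearr a N powr q * real (n + 1) powr (q / p - 1))"
    by (simp add: sum_distrib_left)
  also have "\<dots> \<le> (\<Sum>n<N. lorentz_term p q a (n + 1))"
  proof (rule sum_mono)
    fix n
    assume "n \<in> {..<N}"
    then have "0 \<le> decr_rearr a N" "decr_rearr a N \<le> decr_rearr a (n + 1)"
      using levels by (auto intro: decr_rearr_nonneg decr_rearr_antimono)
    then have "decr_rearr a N powr q \<le> decr_rearr a (n + 1) powr q"
      using q by (intro powr_mono2)
    then show "decr_rearr a N powr q * real (n + 1) powr (q / p - 1) \<le> lorentz_term p q a (n + 1)"
      unfolding lorentz_term_def by (intro mult_right_mono) auto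
  qed
  also have "\<dots> \<le> (\<Sum>n. lorentz_term p q a (n + 1))"
    using a by (intro sum_le_suminf) (auto simp: in_lorentz_def lorentz_term_nonneg)
  finally show ?thesis .
qed

lemma decr_rearr_le_lorentz_norm:
  assumes p: "0 < p" and pq: "p \<le> q" and a: "in_lorentz p q a" and N: "N \<ge> 1"
  shows "real N powr (1 / p) * decr_rearr a N \<le> (q / p) powr (1 / q) * lorentz_norm p q a"
proof -
  define r where "r = q / p"
  define d where "d = decr_rearr a N"
  define \<Sigma> where "\<Sigma> = (\<Sum>n. lorentz_term p q a (n + 1))"
  have r: "r \<ge> 1" and q: "q > 0"
    using p pq by (simp_all add: r_def)
  have d: "0 \<le> d"
    using a N by (simp add: d_def in_lorentz_def decr_rearr_nonneg)
  have "d powr q * (real N powr r / r) \<le> d powr q * (\<Sum>n<N. real (n + 1) powr (r - 1))"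
    using sum_Suc_powr_lower[OF r] by (intro mult_left_mono) auto
  also have "\<dots> \<le> \<Sigma>"
    using decr_rearr_powr_partial_sum_le[OF a] q by (simp add: d_def r_def \<Sigma>_def)
  finally have "d powr q * real N powr r \<le> r * \<Sigma>"
    using r by (simp add: field_simps)
  then have "(d powr q * real N powr r) powr (1 / q) \<le> (r * \<Sigma>) powr (1 / q)"
    using q by (intro powr_mono2) auto
  moreover have "(d powr q * real N powr r) powr (1 / q) = real N powr (1 / p) * d"
    using q p d by (simp add: powr_mult powr_powr r_def)
  moreover have "(r * \<Sigma>) powr (1 / q) = r powr (1 / q) * lorentz_norm p q a"
    using r by (simp add: powr_mult lorentz_norm_def \<Sigma>_def)
  ultimately show ?thesis
    by (simp add: d_def r_def)
qed

lemma embedding_norm_upper_bound: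
  assumes "0 < p" and "p \<le> q"
  shows "embedding_norm p q \<le> ereal ((q / p) powr (1 / q))"
  unfolding embedding_norm_def weak_lorentz_norm_def
proof (intro SUP_least)
  fix a and N :: nat
  assume "a \<in> {a. in_lorentz p q a \<and> lorentz_norm p q a \<le> 1}" and "N \<in> {1..}"
  then have a: "in_lorentz p q a" "lorentz_norm p q a \<le> 1" and N: "N \<ge> 1"
    by auto
  have "real N powr (1 / p) * decr_rearr a N \<le> (q / p) powr (1 / q) * lorentz_norm p q a"
    using decr_rearr_le_lorentz_norm[OF assms a(1) N] .
  also have "\<dots> \<le> (q / p) powr (1 / q)"
    using a(2) by (simp add: mult_left_le)
  finally show "ereal (real N powr (1 / p) * decr_rearr a N) \<le> ereal ((q / p) powr (1 / q))"
    by simp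
qed

definition block_seq :: "nat \<Rightarrow> real \<Rightarrow> nat \<Rightarrow> real" where
  "block_seq N c k = (if k < N then c else 0)"

lemma rearr_levels_block_seq:
  assumes "c > 0"
  shows "rearr_levels (block_seq N c) n = (if N \<le> n - 1 then {0<..} else {c..})"
proof -
  have "{k. w < \<bar>block_seq N c k\<bar>} = (if w < c then {..<N} else {})" if "w > 0" for w
    using that assms by (auto simp: block_seq_def)
  then show ?thesis
    using assms by (auto simp: rearr_levels_def not_le split: if_splits)
qed

lemma decr_rearr_block_seq:
  "c > 0 \<Longrightarrow> decr_rearr (block_seq N c) n = (if N \<le> n - 1 then 0 else c)"
  by (simp add: decr_rearr_def rearr_levels_block_seq)

lemma lorentz_terms_block_seq_sums:
  assumes "c > 0"
  shows "(\<lambda>n. lorentz_term p q (block_seq N c) (n + 1))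
           sums (c powr q * (\<Sum>n<N. real (n + 1) powr (q / p - 1)))"
proof -
  have "(\<lambda>n. lorentz_term p q (block_seq N c) (n + 1))
          sums (\<Sum>n<N. lorentz_term p q (block_seq N c) (n + 1))"
    using assms by (intro sums_finite) (auto simp: lorentz_term_def decr_rearr_block_seq)
  also have "(\<Sum>n<N. lorentz_term p q (block_seq N c) (n + 1))
               = c powr q * (\<Sum>n<N. real (n + 1) powr (q / p - 1))"
    using assms by (simp add: lorentz_term_def decr_rearr_block_seq sum_distrib_left)
  finally show ?thesis .
qed

lemma in_lorentz_block_seq:
  assumes "c > 0"
  shows "in_lorentz p q (block_seq N c)"
  using sums_summable[OF lorentz_terms_block_seq_sums[OF assms]] assms
  by (auto simp: in_lorentz_def rearr_levels_block_seq)

lemma lorentz_norm_block_seq: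
  assumes "c > 0" and "q > 0"
  shows "lorentz_norm p q (block_seq N c)
           = c * (\<Sum>n<N. real (n + 1) powr (q / p - 1)) powr (1 / q)"
proof -
  have "lorentz_norm p q (block_seq N c)
          = (c powr q * (\<Sum>n<N. real (n + 1) powr (q / p - 1))) powr (1 / q)"
    unfolding lorentz_norm_def
    using lorentz_terms_block_seq_sums[OF assms(1), THEN sums_unique] by simp
  also have "\<dots> = c * (\<Sum>n<N. real (n + 1) powr (q / p - 1)) powr (1 / q)"
    using assms by (simp add: powr_mult powr_powr sum_nonneg)
  finally show ?thesis .
qed

lemma embedding_norm_lower_bound:
  assumes p: "0 < p" and pq: "p \<le> q" and N: "N \<ge> 1"
  shows "ereal ((q / p) powr (1 / q) * (real N / real (N + 1)) powr (1 / p)) \<le> embedding_norm p q"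
proof -
  define r where "r = q / p"
  define S where "S = (\<Sum>n<N. real (n + 1) powr (r - 1))"
  define c where "c = S powr (- 1 / q)"
  have r: "r \<ge> 1" and q: "q > 0"
    using p pq by (simp_all add: r_def)
  have S: "S > 0"
    unfolding S_def using N by (intro sum_pos2[of "{..<N}" 0]) auto
  have c: "c > 0"
    using S by (simp add: c_def)
  have norm: "lorentz_norm p q (block_seq N c) = 1"
    using c q S
    by (simp add: lorentz_norm_block_seq c_def r_def S_def flip: powr_add)
  have "r * (1 / q) = 1 / p"
    using q p by (simp add: r_def)
  then have "r powr (1 / q) / real (N + 1) powr (1 / p) = 1 / (real (N + 1) powr r / r) powr (1 / q)"
    by (simp only: powr_divide powr_powr) simp
  also have "\<dots> \<le> 1 / S powr (1 / q)"
    using S q sum_Suc_powr_upper[OF r, of N]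
    by (intro divide_left_mono powr_mono2 mult_pos_pos) (auto simp: S_def)
  also have "\<dots> = c"
    using S by (simp add: c_def powr_minus_divide)
  finally have c_bound: "r powr (1 / q) / real (N + 1) powr (1 / p) \<le> c" .
  have "r powr (1 / q) * (real N / real (N + 1)) powr (1 / p)
          = r powr (1 / q) / real (N + 1) powr (1 / p) * real N powr (1 / p)"
    by (simp add: powr_divide)
  also have "\<dots> \<le> c * real N powr (1 / p)"
    using c_bound by (rule mult_right_mono) simp
  also have "\<dots> = real N powr (1 / p) * decr_rearr (block_seq N c) N"
    using c N by (simp add: decr_rearr_block_seq)
  also have "ereal \<dots> \<le> weak_lorentz_norm p (block_seq N c)"
    unfolding weak_lorentz_norm_def using N by (intro SUP_upper) auto
  also have "\<dots> \<le> embedding_norm p q"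
    unfolding embedding_norm_def using c norm in_lorentz_block_seq by (intro SUP_upper) auto
  finally show ?thesis
    by (simp add: r_def)
qed

theorem mainTheorem10:
  fixes p q :: real
  assumes "0 < p" and "p < q"
  shows "embedding_norm p q = ereal ((q / p) powr (1 / q))"
proof (rule antisym)
  show "embedding_norm p q \<le> ereal ((q / p) powr (1 / q))"
    using assms by (intro embedding_norm_upper_bound) auto
  have "(\<lambda>N. (real N / real (N + 1)) powr (1 / p)) \<longlonglongrightarrow> 1"
    using tendsto_powr[OF LIMSEQ_n_over_Suc_n tendsto_const, of "1 / p"] by simp
  then have "(\<lambda>N. ereal ((q / p) powr (1 / q) * (real N / real (N + 1)) powr (1 / p)))
               \<longlonglongrightarrow> ereal ((q / p) powr (1 / q))"
    by (intro tendsto_ereal) (metis tendsto_mult_left mult_1_right)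
  then show "ereal ((q / p) powr (1 / q)) \<le> embedding_norm p q"
    by (rule Lim_bounded[where M = 1]) (use embedding_norm_lower_bound assms in auto)
qed

end
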